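(* Let $Q$ be a quiver and $\theta\in\mathbb{Z}^{Q_0}$ with $\nabla(Q,\theta)\ne\emptyset$. Suppose that some vertex $v$ has exactly two arrows $a,b$ attached to it, where $a$ connects $v$ with a vertex $u$ and $b$ connects $v$ with a vertex $w$ ($u,v,w$ distinct), and either both $a,b$ point towards $v$ or both point away from $v$. Let $Q'$ be obtained from $Q$ by replacing $a,b$ by the reversed arrows $\hat a,\hat b$, and let $\theta'\in\mathbb{Z}^{Q'_0}=\mathbb{Z}^{Q_0}$ be given by $\theta'(v)=-\theta(v)$, $\theta'(u)=\theta(u)+\theta(v)$, $\theta'(w)=\theta(w)+\theta(v)$, and $\theta'(z)=\theta(z)$ for all other vertices $z$. Then $\nabla(Q,\theta)$ and $\nabla(Q',\theta')$ are integral-affinely equivalent.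
   Context: A quiver $Q$: vertices $Q_0$, arrows $Q_1$, $a$ from $a^-$ to $a^+$. $\nabla(Q,\theta)=\{x\in\mathbb{R}_{\ge0}^{Q_1}\mid\forall v:\ \theta(v)=\sum_{a^+=v}x(a)-\sum_{a^-=v}x(a)\}$. Lattice polyhedra $\nabla_i\subset V_i$ with lattices $M_i$ (here $\mathbb{Z}^{Q_1}$, $\mathbb{Z}^{Q'_1}$) are integral-affinely equivalent if an affine isomorphism $\mathrm{AffSpan}(\nabla_1)\to\mathrm{AffSpan}(\nabla_2)$ maps $\mathrm{AffSpan}(\nabla_1)\cap M_1$ onto $\mathrm{AffSpan}(\nabla_2)\cap M_2$ and $\nabla_1$ onto $\nabla_2$. *)

theory Defs
  imports "HOL-Analysis.Analysis"
begin

text \<open>A quiver with finite vertex type 'v and finite arrow type 'a (all elements of the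
types are vertices/arrows), given by tail and head maps: arrow c goes from src c to tgt c.\<close>

definition nabla :: "('a::finite \<Rightarrow> 'v) \<Rightarrow> ('a \<Rightarrow> 'v) \<Rightarrow> ('v \<Rightarrow> int) \<Rightarrow> (real^'a) set" where
  "nabla src tgt \<theta> = {x. (\<forall>c. x $ c \<ge> 0) \<and>
     (\<forall>z. real_of_int (\<theta> z) = (\<Sum>c\<in>{c. tgt c = z}. x $ c) - (\<Sum>c\<in>{c. src c = z}. x $ c))}"

definition int_vecs :: "(real^'n) set" where
  "int_vecs = {x. \<forall>i. x $ i \<in> \<int>}"

definition int_aff_equiv :: "(real^'n) set \<Rightarrow> (real^'m) set \<Rightarrow> bool" where
  "int_aff_equiv P1 P2 \<longleftrightarrow> (\<exists>f.
      (\<exists>l c. linear l \<and> (\<forall>x\<in>affine hull P1. f x = l x + c)) \<and>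
      bij_betw f (affine hull P1) (affine hull P2) \<and>
      f ` (affine hull P1 \<inter> int_vecs) = affine hull P2 \<inter> int_vecs \<and>
      f ` P1 = P2)"

definition swap_on :: "('a \<Rightarrow> 'v) \<Rightarrow> ('a \<Rightarrow> 'v) \<Rightarrow> 'a set \<Rightarrow> 'a \<Rightarrow> 'v" where
  "swap_on src tgt S c = (if c \<in> S then tgt c else src c)"

end

theory Submission
  imports Defs
begin

text \<open>Since only \<open>a\<close> and \<open>b\<close> touch \<open>v\<close>, the flow condition at \<open>v\<close> fixes \<open>x(a) + x(b) = \<plusminus>\<theta>(v)\<close>.
Reversing both arrows and exchanging their flow values, \<open>x'(a) = x(b)\<close> and \<open>x'(b) = x(a)\<close>, keeps
all other balances, negates the one at \<open>v\<close> and shifts those at \<open>u\<close> and \<open>w\<close> by exactly \<open>\<theta>(v)\<close>.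
Exchanging two coordinates is a lattice-preserving linear involution, so it is an integral-affine
equivalence.\<close>

definition permute_vec :: "('n \<Rightarrow> 'n) \<Rightarrow> real^'n \<Rightarrow> real^'n" where
  "permute_vec \<sigma> x = (\<chi> i. x $ \<sigma> i)"

lemma linear_permute_vec: "linear (permute_vec \<sigma>)"
  unfolding permute_vec_def by (rule linearI) (simp_all add: vec_eq_iff)

lemma permute_vec_inv:
  assumes "bij \<sigma>"
  shows "permute_vec (inv \<sigma>) (permute_vec \<sigma> x) = x"
  using assms by (simp add: permute_vec_def vec_eq_iff bij_is_surj surj_f_inv_f)

lemma inj_permute_vec: "bij \<sigma> \<Longrightarrow> inj (permute_vec \<sigma>)"
  by (metis injI permute_vec_inv)

lemma permute_vec_in_int_vecs: "x \<in> int_vecs \<Longrightarrow> permute_vec \<sigma> x \<in> int_vecs"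
  by (simp add: int_vecs_def permute_vec_def)

lemma permute_vec_int_vecs:
  fixes \<sigma> :: "'n::finite \<Rightarrow> 'n"
  assumes "bij \<sigma>"
  shows "permute_vec \<sigma> ` int_vecs = int_vecs"
proof (intro subset_antisym subsetI)
  fix x :: "real^'n" assume "x \<in> int_vecs"
  then have "permute_vec (inv \<sigma>) x \<in> int_vecs" by (rule permute_vec_in_int_vecs)
  moreover have "permute_vec \<sigma> (permute_vec (inv \<sigma>) x) = x"
    using permute_vec_inv[OF bij_imp_bij_inv[OF assms]] assms by (simp add: inv_inv_eq)
  ultimately show "x \<in> permute_vec \<sigma> ` int_vecs" by (metis image_eqI)
qed (auto intro: permute_vec_in_int_vecs)

lemma int_aff_equiv_linear_image:
  assumes "linear f" "inj f" "f ` int_vecs = int_vecs"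
  shows "int_aff_equiv P (f ` P)"
  unfolding int_aff_equiv_def
proof (intro exI conjI)
  have hull: "f ` (affine hull P) = affine hull (f ` P)"
    using assms(1) by (simp add: affine_hull_linear_image linear_conv_bounded_linear)
  show "\<forall>x\<in>affine hull P. f x = f x + 0" by simp
  show "bij_betw f (affine hull P) (affine hull (f ` P))"
    using hull assms(2) unfolding bij_betw_def by (metis inj_on_subset top_greatest)
  show "f ` (affine hull P \<inter> int_vecs) = affine hull (f ` P) \<inter> int_vecs"
    using hull assms(2,3) by (simp add: image_Int)
qed (use assms(1) in auto)

lemma int_aff_equiv_permute_vec: "bij \<sigma> \<Longrightarrow> int_aff_equiv P (permute_vec \<sigma> ` P)"
  by (simp add: int_aff_equiv_linear_image linear_permute_vec inj_permute_vec permute_vec_int_vecs)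

definition arrow_flow :: "('a \<Rightarrow> 'v) \<Rightarrow> ('a \<Rightarrow> 'v) \<Rightarrow> real^'a \<Rightarrow> 'v \<Rightarrow> 'a \<Rightarrow> real" where
  "arrow_flow src tgt x z c = (if tgt c = z then x $ c else 0) - (if src c = z then x $ c else 0)"

definition net_flow :: "('a::finite \<Rightarrow> 'v) \<Rightarrow> ('a \<Rightarrow> 'v) \<Rightarrow> real^'a \<Rightarrow> 'v \<Rightarrow> real" where
  "net_flow src tgt x z = (\<Sum>c\<in>UNIV. arrow_flow src tgt x z c)"

lemma nabla_eq_net_flow:
  "nabla src tgt \<theta> = {x. (\<forall>c. 0 \<le> x $ c) \<and> net_flow src tgt x = (\<lambda>z. real_of_int (\<theta> z))}"
proof -
  have "net_flow src tgt x z = (\<Sum>c | tgt c = z. x $ c) - (\<Sum>c | src c = z. x $ c)" for x z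
    by (simp add: net_flow_def arrow_flow_def sum_subtractf sum.If_cases Int_def)
  then show ?thesis
    by (auto simp: nabla_def fun_eq_iff)
qed

lemma net_flow_split:
  assumes "a \<noteq> b"
  shows "net_flow src tgt x z =
    (\<Sum>c\<in>-{a, b}. arrow_flow src tgt x z c) + arrow_flow src tgt x z a + arrow_flow src tgt x z b"
proof -
  have "net_flow src tgt x z =
      (\<Sum>c\<in>UNIV - {a, b}. arrow_flow src tgt x z c) + (\<Sum>c\<in>{a, b}. arrow_flow src tgt x z c)"
    unfolding net_flow_def by (rule sum.subset_diff) auto
  then show ?thesis
    using assms by (simp add: Compl_eq_Diff_UNIV)
qed

lemma arrow_flow_away:
  "src c \<noteq> z \<Longrightarrow> tgt c \<noteq> z \<Longrightarrow> arrow_flow src tgt x z c = 0"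
  by (simp add: arrow_flow_def)

lemma arrow_flow_swap_on:
  "arrow_flow (swap_on src tgt S) (swap_on tgt src S) x z c =
     (if c \<in> S then - arrow_flow src tgt x z c else arrow_flow src tgt x z c)"
  by (simp add: arrow_flow_def swap_on_def)

definition flip_weight :: "'v \<Rightarrow> 'v \<Rightarrow> 'v \<Rightarrow> ('v \<Rightarrow> 'b::ab_group_add) \<Rightarrow> 'v \<Rightarrow> 'b" where
  "flip_weight u v w \<phi> z =
     (if z = v then - \<phi> v else if z = u then \<phi> u + \<phi> v else if z = w then \<phi> w + \<phi> v else \<phi> z)"

lemma flip_weight_flip_weight:
  assumes "u \<noteq> v" "v \<noteq> w" "u \<noteq> w"
  shows "flip_weight u v w (flip_weight u v w \<phi>) = \<phi>"
  using assms by (auto simp: flip_weight_def fun_eq_iff)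

lemma flip_weight_eq_iff:
  assumes "u \<noteq> v" "v \<noteq> w" "u \<noteq> w"
  shows "flip_weight u v w \<phi> = flip_weight u v w \<psi> \<longleftrightarrow> \<phi> = \<psi>"
  by (metis flip_weight_flip_weight[OF assms])

lemma of_int_flip_weight:
  "(\<lambda>z. of_int (flip_weight u v w \<theta> z)) = flip_weight u v w (\<lambda>z. of_int (\<theta> z))"
  by (simp add: flip_weight_def fun_eq_iff)

lemma net_flow_reverse_at_two_arrow_vertex:
  assumes "a \<noteq> b" and star: "{c. src c = v \<or> tgt c = v} = {a, b}"
    and "u \<noteq> v" "v \<noteq> w" "u \<noteq> w"
    and "(src a = u \<and> tgt a = v \<and> src b = w \<and> tgt b = v) \<or>
         (src a = v \<and> tgt a = u \<and> src b = v \<and> tgt b = w)"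
  shows "net_flow (swap_on src tgt {a, b}) (swap_on tgt src {a, b})
           (permute_vec (Transposition.transpose a b) x)
         = flip_weight u v w (net_flow src tgt x)"
proof
  fix z
  let ?y = "permute_vec (Transposition.transpose a b) x"
  have ya: "?y $ a = x $ b" and yb: "?y $ b = x $ a"
    by (simp_all add: permute_vec_def)
  have rest: "(\<Sum>c\<in>-{a, b}. arrow_flow (swap_on src tgt {a, b}) (swap_on tgt src {a, b}) ?y z c)
      = (\<Sum>c\<in>-{a, b}. arrow_flow src tgt x z c)"
    by (rule sum.cong) (simp_all add: arrow_flow_def swap_on_def permute_vec_def)
  have rest_v: "(\<Sum>c\<in>-{a, b}. arrow_flow src tgt x v c) = 0"
    by (rule sum.neutral) (use star in \<open>auto intro!: arrow_flow_away\<close>)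
  have reversed: "net_flow (swap_on src tgt {a, b}) (swap_on tgt src {a, b}) ?y z
      = (\<Sum>c\<in>-{a, b}. arrow_flow src tgt x z c) - arrow_flow src tgt ?y z a - arrow_flow src tgt ?y z b"
    unfolding net_flow_split[OF \<open>a \<noteq> b\<close>] rest by (simp add: arrow_flow_swap_on)
  from assms(6) show "net_flow (swap_on src tgt {a, b}) (swap_on tgt src {a, b}) ?y z
      = flip_weight u v w (net_flow src tgt x) z"
    unfolding reversed unfolding flip_weight_def net_flow_split[OF \<open>a \<noteq> b\<close>]
    using \<open>u \<noteq> v\<close> \<open>v \<noteq> w\<close> \<open>u \<noteq> w\<close>
    by (elim disjE conjE; cases "z = v"; cases "z = u"; cases "z = w")
      (simp_all add: arrow_flow_def ya yb rest_v[unfolded arrow_flow_def])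
qed

lemma image_involution_eq:
  assumes "\<And>y. f (f y) = y" and "\<And>y. y \<in> B \<longleftrightarrow> f y \<in> A"
  shows "f ` A = B"
  using assms by (auto simp: image_iff) metis

lemma nabla_reverse_at_two_arrow_vertex:
  assumes "a \<noteq> b" and "{c. src c = v \<or> tgt c = v} = {a, b}"
    and uvw: "u \<noteq> v" "v \<noteq> w" "u \<noteq> w"
    and "(src a = u \<and> tgt a = v \<and> src b = w \<and> tgt b = v) \<or>
         (src a = v \<and> tgt a = u \<and> src b = v \<and> tgt b = w)"
  shows "permute_vec (Transposition.transpose a b) ` nabla src tgt \<theta>
         = nabla (swap_on src tgt {a, b}) (swap_on tgt src {a, b}) (flip_weight u v w \<theta>)"
proof (rule image_involution_eq)
  let ?f = "permute_vec (Transposition.transpose a b)"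
  show invol: "?f (?f y) = y" for y
    by (simp add: permute_vec_def vec_eq_iff)
  have nonneg: "(\<forall>c. 0 \<le> ?f y $ c) \<longleftrightarrow> (\<forall>c. 0 \<le> y $ c)" for y
    by (simp add: permute_vec_def) (metis transpose_involutory)
  have "net_flow (swap_on src tgt {a, b}) (swap_on tgt src {a, b}) y
        = flip_weight u v w (net_flow src tgt (?f y))" for y
    using net_flow_reverse_at_two_arrow_vertex[OF assms, of "?f y"] invol by simp
  then show "y \<in> nabla (swap_on src tgt {a, b}) (swap_on tgt src {a, b}) (flip_weight u v w \<theta>)
      \<longleftrightarrow> ?f y \<in> nabla src tgt \<theta>" for y
    by (simp add: nabla_eq_net_flow nonneg of_int_flip_weight flip_weight_eq_iff[OF uvw])
qed

theorem proposition4p8: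
  fixes src tgt :: "'a::finite \<Rightarrow> 'v::finite" and \<theta> :: "'v \<Rightarrow> int"
    and u v w :: 'v and a b :: 'a
  assumes "nabla src tgt \<theta> \<noteq> {}"
    and "a \<noteq> b"
    and "{c. src c = v \<or> tgt c = v} = {a, b}"
    and "u \<noteq> v" and "v \<noteq> w" and "u \<noteq> w"
    and "(src a = u \<and> tgt a = v \<and> src b = w \<and> tgt b = v) \<or>
         (src a = v \<and> tgt a = u \<and> src b = v \<and> tgt b = w)"
  shows "int_aff_equiv (nabla src tgt \<theta>)
           (nabla (swap_on src tgt {a, b}) (swap_on tgt src {a, b})
              (\<lambda>z. if z = v then - \<theta> v
                   else if z = u then \<theta> u + \<theta> v
                   else if z = w then \<theta> w + \<theta> v
                   else \<theta> z))"
proof -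
  have "int_aff_equiv (nabla src tgt \<theta>)
      (permute_vec (Transposition.transpose a b) ` nabla src tgt \<theta>)"
    by (simp add: int_aff_equiv_permute_vec)
  then show ?thesis
    unfolding nabla_reverse_at_two_arrow_vertex[OF assms(2-7)] flip_weight_def .
qed

end
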